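(* Let $P,Q$ be partial semigroups and $f:P\to Q$ a partial homomorphism. If $Q$ is IP-regular and the subset $f^{-1}[E(Q)]$ of $P$ is IP-regular, then $P$ is IP-regular.
   Context: A partial semigroup is a set with a partially defined multiplication such that $(ab)c=a(bc)$ whenever both sides are defined; any subset inherits a partial semigroup structure by restricting the operation. $E(P)$ is the set of idempotents ($aa$ defined and equal to $a$). A partial homomorphism $f:P\to Q$ is a map such that whenever $ab$ is defined in $P$, $f(a)f(b)$ is defined in $Q$ and $f(ab)=f(a)f(b)$. For a sequence $\vec{x}$ all of whose finite ordered products $\prod_{i\in a}x_i$ ($a$ finite nonempty subset of $\omega$, increasing order) are defined, $\mathrm{FP}(\vec{x})$ is the set of these products and $\mathrm{FP}_1(\vec{x})=\mathrm{FP}((x_{n+1})_n)$; an IP-set is a set containing such an $\mathrm{FP}(\vec{x})$. $P$ is strongly IP-regular if for every such sequence $\vec{x}$ in $P$, $x_0\mathrm{FP}_1(\vec{x})$ is not an IP-set; $P$ is IP-regular if $P\setminus E(P)$ is a union of finitely many strongly IP-regular subsets. *)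

theory Defs
  imports Main
begin

text \<open>A partial semigroup is a carrier set S together with a partial operation
  m :: 'a => 'a => 'a option (None = undefined). Everything is relativised to S.\<close>

type_synonym 'a pop = "'a \<Rightarrow> 'a \<Rightarrow> 'a option"

definition partial_semigroup :: "'a set \<Rightarrow> 'a pop \<Rightarrow> bool" where
  "partial_semigroup S m \<longleftrightarrow>
     (\<forall>a\<in>S. \<forall>b\<in>S. \<forall>c. m a b = Some c \<longrightarrow> c \<in> S) \<and>
     (\<forall>a\<in>S. \<forall>b\<in>S. \<forall>c\<in>S. \<forall>ab bc x y.
        m a b = Some ab \<longrightarrow> m ab c = Some x \<longrightarrow>
        m b c = Some bc \<longrightarrow> m a bc = Some y \<longrightarrow> x = y)"

definition restr :: "'a set \<Rightarrow> 'a pop \<Rightarrow> 'a pop" where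
  "restr T m a b = (if a \<in> T \<and> b \<in> T then
      (case m a b of None \<Rightarrow> None | Some c \<Rightarrow> if c \<in> T then Some c else None)
    else None)"

definition idems :: "'a set \<Rightarrow> 'a pop \<Rightarrow> 'a set" where
  "idems S m = {a \<in> S. m a a = Some a}"

definition partial_hom :: "'a set \<Rightarrow> 'a pop \<Rightarrow> 'b set \<Rightarrow> 'b pop \<Rightarrow> ('a \<Rightarrow> 'b) \<Rightarrow> bool" where
  "partial_hom P mP Q mQ f \<longleftrightarrow> f ` P \<subseteq> Q \<and>
     (\<forall>a\<in>P. \<forall>b\<in>P. \<forall>c. mP a b = Some c \<longrightarrow> mQ (f a) (f b) = Some (f c))"

fun lprod :: "'a pop \<Rightarrow> 'a list \<Rightarrow> 'a option" where
  "lprod m [] = None"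
| "lprod m (a # as) = foldl (\<lambda>acc b. Option.bind acc (\<lambda>c. m c b)) (Some a) as"

definition seqprod :: "'a pop \<Rightarrow> (nat \<Rightarrow> 'a) \<Rightarrow> nat set \<Rightarrow> 'a option" where
  "seqprod m x A = lprod m (map x (sorted_list_of_set A))"

definition FP_defined :: "'a pop \<Rightarrow> (nat \<Rightarrow> 'a) \<Rightarrow> bool" where
  "FP_defined m x \<longleftrightarrow> (\<forall>A. finite A \<and> A \<noteq> {} \<longrightarrow> seqprod m x A \<noteq> None)"

definition FP :: "'a pop \<Rightarrow> (nat \<Rightarrow> 'a) \<Rightarrow> 'a set" where
  "FP m x = {y. \<exists>A. finite A \<and> A \<noteq> {} \<and> seqprod m x A = Some y}"

definition FP1 :: "'a pop \<Rightarrow> (nat \<Rightarrow> 'a) \<Rightarrow> 'a set" where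
  "FP1 m x = FP m (\<lambda>n. x (Suc n))"

definition IP_set :: "'a set \<Rightarrow> 'a pop \<Rightarrow> 'a set \<Rightarrow> bool" where
  "IP_set S m B \<longleftrightarrow> (\<exists>x. range x \<subseteq> S \<and> FP_defined m x \<and> FP m x \<subseteq> B)"

definition lmult_set :: "'a pop \<Rightarrow> 'a \<Rightarrow> 'a set \<Rightarrow> 'a set" where
  "lmult_set m a B = {z. \<exists>y\<in>B. m a y = Some z}"

definition strongly_IP_regular :: "'a set \<Rightarrow> 'a pop \<Rightarrow> bool" where
  "strongly_IP_regular S m \<longleftrightarrow>
     (\<forall>x. range x \<subseteq> S \<longrightarrow> FP_defined m x \<longrightarrow>
        \<not> IP_set S m (lmult_set m (x 0) (FP1 m x)))"

definition IP_regular :: "'a set \<Rightarrow> 'a pop \<Rightarrow> bool" where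
  "IP_regular S m \<longleftrightarrow>
     (\<exists>F. finite F \<and> \<Union>F = S - idems S m \<and>
        (\<forall>T\<in>F. T \<subseteq> S \<and> strongly_IP_regular T (restr T m)))"

end

theory Submission
  imports Defs
begin

text \<open>A partial homomorphism g maps defined finite products to defined finite products,
  so it carries IP-sets to IP-sets and x_0 FP_1(x) into (g x)_0 FP_1(g x); hence preimages
  of strongly IP-regular sets are strongly IP-regular. A non-idempotent of P is either mapped
  to a non-idempotent of Q, and so lies in the preimage of a finite strongly IP-regular cover
  of Q - E(Q), or is a non-idempotent of f^-1[E(Q)], covered by hypothesis.\<close>

definition pop_hom :: "'a pop \<Rightarrow> 'b pop \<Rightarrow> ('a \<Rightarrow> 'b) \<Rightarrow> bool" where
  "pop_hom m1 m2 g \<longleftrightarrow> (\<forall>a b c. m1 a b = Some c \<longrightarrow> m2 (g a) (g b) = Some (g c))"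

lemma foldl_bind_None: "foldl (\<lambda>acc b. Option.bind acc (\<lambda>c. m c b)) None xs = None"
  by (induction xs) auto

lemma foldl_bind_hom:
  assumes hom: "pop_hom m1 m2 g"
    and "foldl (\<lambda>acc b. Option.bind acc (\<lambda>c. m1 c b)) (Some a) xs = Some c"
  shows "foldl (\<lambda>acc b. Option.bind acc (\<lambda>c. m2 c b)) (Some (g a)) (map g xs) = Some (g c)"
  using assms(2)
proof (induction xs arbitrary: a)
  case (Cons x xs)
  then obtain d where "m1 a x = Some d"
    by (cases "m1 a x") (auto simp: foldl_bind_None)
  with Cons hom show ?case by (auto simp: pop_hom_def)
qed simp

lemma lprod_hom:
  assumes "pop_hom m1 m2 g"
    and "lprod m1 xs = Some c"
  shows "lprod m2 (map g xs) = Some (g c)"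
  using assms by (cases xs) (auto intro: foldl_bind_hom)

lemma seqprod_hom:
  assumes "pop_hom m1 m2 g"
    and "seqprod m1 x A = Some c"
  shows "seqprod m2 (g \<circ> x) A = Some (g c)"
proof -
  have "lprod m1 (map x (sorted_list_of_set A)) = Some c"
    using assms(2) by (simp add: seqprod_def)
  then have "lprod m2 (map g (map x (sorted_list_of_set A))) = Some (g c)"
    by (rule lprod_hom[OF assms(1)])
  then show ?thesis by (simp add: seqprod_def)
qed

lemma FP_defined_hom:
  assumes "pop_hom m1 m2 g"
    and "FP_defined m1 x"
  shows "FP_defined m2 (g \<circ> x)"
  using assms(2) seqprod_hom[OF assms(1)] unfolding FP_defined_def by (metis not_None_eq)

lemma image_FP_subset:
  assumes "pop_hom m1 m2 g"
  shows "g ` FP m1 x \<subseteq> FP m2 (g \<circ> x)"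
  using seqprod_hom[OF assms] unfolding FP_def by fastforce

lemma FP_hom:
  assumes hom: "pop_hom m1 m2 g"
    and "FP_defined m1 x"
  shows "FP m2 (g \<circ> x) = g ` FP m1 x"
proof
  show "FP m2 (g \<circ> x) \<subseteq> g ` FP m1 x"
  proof
    fix w assume "w \<in> FP m2 (g \<circ> x)"
    then obtain A where A: "finite A" "A \<noteq> {}" "seqprod m2 (g \<circ> x) A = Some w"
      unfolding FP_def by blast
    moreover obtain c where c: "seqprod m1 x A = Some c"
      using A(1,2) \<open>FP_defined m1 x\<close> unfolding FP_defined_def by blast
    ultimately have "w = g c" using seqprod_hom[OF hom c] by simp
    with A c show "w \<in> g ` FP m1 x" unfolding FP_def by blast
  qed
qed (rule image_FP_subset[OF hom])

lemma IP_set_mono: "IP_set S m B \<Longrightarrow> B \<subseteq> C \<Longrightarrow> IP_set S m C"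
  unfolding IP_set_def by blast

lemma IP_set_image:
  assumes hom: "pop_hom m1 m2 g"
    and "IP_set S m1 B" and "g ` S \<subseteq> T"
  shows "IP_set T m2 (g ` B)"
proof -
  obtain y where y: "range y \<subseteq> S" "FP_defined m1 y" "FP m1 y \<subseteq> B"
    using \<open>IP_set S m1 B\<close> unfolding IP_set_def by blast
  have "range (g \<circ> y) \<subseteq> T" using y(1) \<open>g ` S \<subseteq> T\<close> by auto
  moreover have "FP m2 (g \<circ> y) \<subseteq> g ` B" using FP_hom[OF hom y(2)] y(3) by blast
  ultimately show ?thesis using FP_defined_hom[OF hom y(2)] unfolding IP_set_def by blast
qed

lemma lmult_set_mono: "B \<subseteq> C \<Longrightarrow> lmult_set m a B \<subseteq> lmult_set m a C"
  unfolding lmult_set_def by blast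

lemma image_lmult_set_subset:
  assumes "pop_hom m1 m2 g"
  shows "g ` lmult_set m1 a B \<subseteq> lmult_set m2 (g a) (g ` B)"
  using assms unfolding lmult_set_def pop_hom_def by blast

lemma strongly_IP_regular_hom_preimage:
  assumes hom: "pop_hom m1 m2 g"
    and "g ` S \<subseteq> T" and "strongly_IP_regular T m2"
  shows "strongly_IP_regular S m1"
  unfolding strongly_IP_regular_def
proof (intro allI impI notI)
  fix x assume x: "range x \<subseteq> S" "FP_defined m1 x"
    and ip: "IP_set S m1 (lmult_set m1 (x 0) (FP1 m1 x))"
  have FP1: "g ` FP1 m1 x \<subseteq> FP1 m2 (g \<circ> x)"
    using image_FP_subset[OF hom, of "\<lambda>n. x (Suc n)"] by (simp add: FP1_def comp_def)
  have "g ` lmult_set m1 (x 0) (FP1 m1 x) \<subseteq> lmult_set m2 (g (x 0)) (g ` FP1 m1 x)"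
    by (rule image_lmult_set_subset[OF hom])
  also have "\<dots> \<subseteq> lmult_set m2 ((g \<circ> x) 0) (FP1 m2 (g \<circ> x))"
    using lmult_set_mono[OF FP1] by simp
  finally have ipT: "IP_set T m2 (lmult_set m2 ((g \<circ> x) 0) (FP1 m2 (g \<circ> x)))"
    by (rule IP_set_mono[OF IP_set_image[OF hom ip \<open>g ` S \<subseteq> T\<close>]])
  have "range (g \<circ> x) \<subseteq> T" using x(1) \<open>g ` S \<subseteq> T\<close> by auto
  with \<open>strongly_IP_regular T m2\<close> FP_defined_hom[OF hom x(2)]
  have "\<not> IP_set T m2 (lmult_set m2 ((g \<circ> x) 0) (FP1 m2 (g \<circ> x)))"
    unfolding strongly_IP_regular_def by (elim allE[of _ "g \<circ> x"]) simp
  with ipT show False by contradiction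
qed

definition strongly_IP_regular_cover :: "'a set \<Rightarrow> 'a pop \<Rightarrow> 'a set \<Rightarrow> bool" where
  "strongly_IP_regular_cover S m X \<longleftrightarrow>
     (\<exists>F. finite F \<and> \<Union>F = X \<and> (\<forall>T\<in>F. T \<subseteq> S \<and> strongly_IP_regular T (restr T m)))"

lemma IP_regular_iff_cover: "IP_regular S m \<longleftrightarrow> strongly_IP_regular_cover S m (S - idems S m)"
  unfolding IP_regular_def strongly_IP_regular_cover_def ..

lemma strongly_IP_regular_cover_Un:
  assumes "strongly_IP_regular_cover S m X" and "strongly_IP_regular_cover S m Y"
  shows "strongly_IP_regular_cover S m (X \<union> Y)"
proof -
  obtain F G where "finite F" "\<Union>F = X" "\<forall>T\<in>F. T \<subseteq> S \<and> strongly_IP_regular T (restr T m)"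
    and "finite G" "\<Union>G = Y" "\<forall>T\<in>G. T \<subseteq> S \<and> strongly_IP_regular T (restr T m)"
    using assms unfolding strongly_IP_regular_cover_def by blast
  then show ?thesis unfolding strongly_IP_regular_cover_def by (intro exI[of _ "F \<union> G"]) auto
qed

lemma restr_restr: "U \<subseteq> E \<Longrightarrow> restr U (restr E m) = restr U m"
  by (rule ext)+ (auto simp: restr_def split: option.splits)

lemma strongly_IP_regular_cover_restr:
  assumes "E \<subseteq> S" and "strongly_IP_regular_cover E (restr E m) X"
  shows "strongly_IP_regular_cover S m X"
  using assms restr_restr unfolding strongly_IP_regular_cover_def by (metis subset_trans)

lemma pop_hom_restr_preimage:
  "partial_hom P mP Q mQ f \<Longrightarrow> pop_hom (restr (P \<inter> f -` U) mP) (restr U mQ) f"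
  unfolding partial_hom_def pop_hom_def restr_def by (auto split: if_splits option.splits)

lemma strongly_IP_regular_cover_preimage:
  assumes hom: "partial_hom P mP Q mQ f" and "strongly_IP_regular_cover Q mQ X"
  shows "strongly_IP_regular_cover P mP (P \<inter> f -` X)"
proof -
  obtain F where F: "finite F" "\<Union>F = X" "\<forall>U\<in>F. strongly_IP_regular U (restr U mQ)"
    using assms(2) unfolding strongly_IP_regular_cover_def by blast
  have "strongly_IP_regular (P \<inter> f -` U) (restr (P \<inter> f -` U) mP)" if "U \<in> F" for U
    by (rule strongly_IP_regular_hom_preimage[OF pop_hom_restr_preimage[OF hom]])
      (use F(3) that in auto)
  moreover have "\<Union>((\<lambda>U. P \<inter> f -` U) ` F) = P \<inter> f -` X" using F(2) by blast
  ultimately show ?thesis using F(1) unfolding strongly_IP_regular_cover_def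
    by (intro exI[of _ "(\<lambda>U. P \<inter> f -` U) ` F"]) blast
qed

lemma idems_restr: "T \<subseteq> S \<Longrightarrow> idems T (restr T m) = T \<inter> idems S m"
  unfolding idems_def restr_def by (auto split: option.splits if_splits)

lemma idems_hom: "partial_hom P mP Q mQ f \<Longrightarrow> f ` idems P mP \<subseteq> idems Q mQ"
  unfolding partial_hom_def idems_def by blast

lemma non_idems_split:
  assumes "partial_hom P mP Q mQ f"
  defines "E \<equiv> P \<inter> f -` idems Q mQ"
  shows "P - idems P mP = (P \<inter> f -` (Q - idems Q mQ)) \<union> (E - idems E (restr E mP))"
proof -
  have "E \<subseteq> P" and "f ` P \<subseteq> Q" using assms unfolding partial_hom_def by auto
  with idems_hom[OF assms(1)] show ?thesis
    using idems_restr[OF \<open>E \<subseteq> P\<close>] unfolding E_def idems_def by blast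
qed

theorem mainTheorem5:
  fixes P :: "'a set" and mP :: "'a pop" and Q :: "'b set" and mQ :: "'b pop"
    and f :: "'a \<Rightarrow> 'b"
  assumes "partial_semigroup P mP" and "partial_semigroup Q mQ"
    and "partial_hom P mP Q mQ f"
    and "IP_regular Q mQ"
    and "IP_regular (P \<inter> f -` idems Q mQ) (restr (P \<inter> f -` idems Q mQ) mP)"
  shows "IP_regular P mP"
proof -
  let ?E = "P \<inter> f -` idems Q mQ"
  have "strongly_IP_regular_cover P mP (P \<inter> f -` (Q - idems Q mQ))"
    using strongly_IP_regular_cover_preimage assms(3,4) IP_regular_iff_cover by blast
  moreover have "strongly_IP_regular_cover P mP (?E - idems ?E (restr ?E mP))"
    using strongly_IP_regular_cover_restr[of ?E P] assms(5) IP_regular_iff_cover by blast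
  ultimately show ?thesis
    unfolding IP_regular_iff_cover non_idems_split[OF assms(3)]
    by (rule strongly_IP_regular_cover_Un)
qed

end
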